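(* Let $\sigma>0$, $\lambda\ne0$, $T>0$, and let $\kappa(t,s)=\frac{\sigma^2}{\lambda^2+\sigma^2t}\mathbbm{1}_{s\le t}$ for $s,t\in[0,T]$ (this is $\lambda^{-2}\tilde K^{t,\lambda}(t,s)\mathbbm 1_{s\le t}$ for the constant covariance $K\equiv\sigma^2$). Define $H(t,s)=\sum_{n\ge0}\kappa^{(n+1)}(t,s)$, where $\kappa^{(1)}=\kappa$ and $\kappa^{(n+1)}(t,s)=\int_s^t\kappa(t,v)\kappa^{(n)}(v,s)\,dv$. Then \[ H(t,s)=\frac{\sigma^2}{\lambda^2+\sigma^2s}\mathbbm 1_{s\le t}. \] *)

theory Defs
  imports "HOL-Analysis.Analysis"
begin

definition kappa :: "real \<Rightarrow> real \<Rightarrow> real \<Rightarrow> real \<Rightarrow> real" where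
  "kappa sg lam t s = (if s \<le> t then sg\<^sup>2 / (lam\<^sup>2 + sg\<^sup>2 * t) else 0)"

text \<open>Iterated kernels: kappa_iter sg lam n = kappa^(n+1), i.e.
  kappa^(1) = kappa and kappa^(n+1)(t,s) = integral over [s,t] of kappa(t,v) kappa^(n)(v,s) dv.\<close>
fun kappa_iter :: "real \<Rightarrow> real \<Rightarrow> nat \<Rightarrow> real \<Rightarrow> real \<Rightarrow> real" where
  "kappa_iter sg lam 0 t s = kappa sg lam t s"
| "kappa_iter sg lam (Suc n) t s =
     integral {s..t} (\<lambda>v. kappa sg lam t v * kappa_iter sg lam n v s)"

end

theory Submission
  imports Defs
begin

text \<open>With \<open>D x = lam\<^sup>2 + sg\<^sup>2 * x\<close> the kernel is \<open>kappa t v = sg\<^sup>2 / D t = (ln \<circ> D)' t\<close>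
  for \<open>v \<le> t\<close>, independent of \<open>v\<close>. So each iteration integrates
  \<open>(ln \<circ> D)' * (ln D - ln D s)\<^sup>n / n!\<close>, and the \<open>n\<close>-th term of the series is
  \<open>sg\<^sup>2 / D t * L\<^sup>n / n!\<close> with \<open>L = ln D t - ln D s\<close>. The exponential series then sums
  to \<open>sg\<^sup>2 / D t * exp L = sg\<^sup>2 / D s\<close>.\<close>

lemma has_integral_deriv_times_power_fact:
  fixes f f' :: "real \<Rightarrow> real"
  assumes "a \<le> b"
    and deriv: "\<And>x. x \<in> {a..b} \<Longrightarrow> (f has_real_derivative f' x) (at x within {a..b})"
  shows "((\<lambda>x. f' x * ((f x - f a) ^ n / fact n)) has_integral
           (f b - f a) ^ Suc n / fact (Suc n)) {a..b}"
proof -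
  define F where "F x = (f x - f a) ^ Suc n / fact (Suc n)" for x
  have "(F has_real_derivative f' x * ((f x - f a) ^ n / fact n)) (at x within {a..b})"
    if "x \<in> {a..b}" for x
  proof -
    have "((\<lambda>x. f x - f a) has_real_derivative f' x) (at x within {a..b})"
      using deriv[OF that] by (auto intro!: derivative_eq_intros)
    then have "(F has_real_derivative
            (1 + of_nat n) * (f' x * (f x - f a) ^ n) / fact (Suc n)) (at x within {a..b})"
      unfolding F_def by (intro DERIV_cdivide DERIV_power_Suc)
    also have "(1 + of_nat n) * (f' x * (f x - f a) ^ n) / fact (Suc n)
             = f' x * ((f x - f a) ^ n / fact n)"
      by (simp add: fact_Suc)
    finally show ?thesis .
  qed
  then have "((\<lambda>x. f' x * ((f x - f a) ^ n / fact n)) has_integral F b - F a) {a..b}"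
    using \<open>a \<le> b\<close> by (intro fundamental_theorem_of_calculus)
      (auto simp: has_real_derivative_iff_has_vector_derivative[symmetric])
  then show ?thesis by (simp add: F_def)
qed

lemma kappa_iter_eq_0:
  assumes "t < s"
  shows "kappa_iter sg lam n t s = 0"
  using assms by (cases n) (auto simp: kappa_def)

lemma kappa_iter_closed_form:
  fixes sg lam s t :: real
  assumes pos: "0 < lam\<^sup>2 + sg\<^sup>2 * s" and "s \<le> t"
  shows "kappa_iter sg lam n t s = sg\<^sup>2 / (lam\<^sup>2 + sg\<^sup>2 * t) *
           ((ln (lam\<^sup>2 + sg\<^sup>2 * t) - ln (lam\<^sup>2 + sg\<^sup>2 * s)) ^ n / fact n)"
  using \<open>s \<le> t\<close>
proof (induction n arbitrary: t)
  case 0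
  then show ?case by (simp add: kappa_def)
next
  case (Suc n)
  define D where "D x = lam\<^sup>2 + sg\<^sup>2 * x" for x
  have D_pos: "0 < D x" if "s \<le> x" for x
    using pos that mult_left_mono[OF that, of "sg\<^sup>2"] by (simp add: D_def)
  have "((\<lambda>x. ln (D x)) has_real_derivative sg\<^sup>2 / D x) (at x within {s..t})"
    if "x \<in> {s..t}" for x
    using D_pos[of x] that unfolding D_def
    by (auto intro!: derivative_eq_intros simp: field_simps)
  from has_integral_deriv_times_power_fact[OF \<open>s \<le> t\<close> this]
  have integral_ln_D: "((\<lambda>v. sg\<^sup>2 / D v * ((ln (D v) - ln (D s)) ^ n / fact n)) has_integral
          (ln (D t) - ln (D s)) ^ Suc n / fact (Suc n)) {s..t}" .
  have "((\<lambda>v. kappa sg lam t v * kappa_iter sg lam n v s) has_integral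
          sg\<^sup>2 / D t * ((ln (D t) - ln (D s)) ^ Suc n / fact (Suc n))) {s..t}"
    by (rule has_integral_eq[OF _ has_integral_mult_right[OF integral_ln_D]])
      (auto simp: kappa_def Suc.IH D_def)
  then show ?case
    by (simp add: integral_unique D_def)
qed

theorem lemma5p2:
  fixes sg lam T s t :: real
  assumes "sg > 0" and "lam \<noteq> 0" and "T > 0"
    and "s \<in> {0..T}" and "t \<in> {0..T}"
  shows "(\<lambda>n. kappa_iter sg lam n t s) sums
           (if s \<le> t then sg\<^sup>2 / (lam\<^sup>2 + sg\<^sup>2 * s) else 0)"
proof (cases "s \<le> t")
  case False
  then show ?thesis by (simp add: kappa_iter_eq_0)
next
  case True
  define D where "D x = lam\<^sup>2 + sg\<^sup>2 * x" for x
  have D_pos: "0 < D s" "0 < D t"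
    using assms True by (auto simp: D_def add_pos_nonneg)
  have "(\<lambda>n. sg\<^sup>2 / D t * ((ln (D t) - ln (D s)) ^ n / fact n))
          sums (sg\<^sup>2 / D t * exp (ln (D t) - ln (D s)))"
    using exp_converges[of "ln (D t) - ln (D s)"]
    by (intro sums_mult) (simp add: divide_inverse mult.commute)
  also have "sg\<^sup>2 / D t * exp (ln (D t) - ln (D s)) = sg\<^sup>2 / D s"
    using D_pos by (simp add: exp_diff)
  finally show ?thesis
    using kappa_iter_closed_form[of lam sg s t] D_pos True by (simp add: D_def)
qed

end
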